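(* Let $\gamma\in(0,2)$, let $L$ be a positive measurable function slowly varying at infinity, and set $g(n)=n^{\gamma}L(n)$. Let $(n_k)_{k\ge0}$ be a nondecreasing sequence of positive integers with $n_k\to\infty$ and $\kappa:=\sup_k n_{k+1}/n_k<\infty$. Then the following are equivalent: (1) there exists $C>0$ such that $\operatorname{Var}(S_{n_k})\le C\,g(n_k)$ for all sufficiently large $k$; (2) there exist $C>0$ and $x_0\in(0,\pi]$ such that $G(x)\le C\,x^{2-\gamma}L(1/x)$ for all $0<x\le x_0$; (3) there exists $C>0$ such that $\operatorname{Var}(S_n)\le C\,g(n)$ for all sufficiently large $n$.
   Context: Let $X_1,X_2,\ldots$ be a sequence of centred, weakly stationary, real random variables with finite second moments. Its spectral measure is the finite Borel measure $F$ on $[-\pi,\pi]$ such that $\operatorname{Cov}(X_0,X_k)=\int_{-\pi}^{\pi}e^{\mathrm{i}tk}\,F(\mathrm{d}t)$ for all integers $k$; it is assumed that $F$ is symmetric about the origin. Define $G(x)=F([-x,x])$ for $0\le x\le\pi$, and $S_n=X_1+\cdots+X_n$. A positive measurable function $L$ is slowly varying at infinity if $L(\lambda x)/L(x)\to1$ as $x\to\infty$ for every $\lambda>0$. *)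

theory Defs
  imports "HOL-Probability.Probability"
begin

definition covariance :: "'a measure \<Rightarrow> ('a \<Rightarrow> real) \<Rightarrow> ('a \<Rightarrow> real) \<Rightarrow> real" where
  "covariance M X Y =
     integral\<^sup>L M (\<lambda>\<omega>. (X \<omega> - integral\<^sup>L M X) * (Y \<omega> - integral\<^sup>L M Y))"

definition slowly_varying :: "(real \<Rightarrow> real) \<Rightarrow> bool" where
  "slowly_varying L \<longleftrightarrow>
     L \<in> borel_measurable borel \<and> (\<forall>x>0. L x > 0) \<and>
     (\<forall>c>0. ((\<lambda>x. L (c * x) / L x) \<longlongrightarrow> 1) at_top)"

definition spectral_measure_of :: "'a measure \<Rightarrow> (nat \<Rightarrow> 'a \<Rightarrow> real) \<Rightarrow> real measure \<Rightarrow> bool" where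
  "spectral_measure_of M X F \<longleftrightarrow>
     sets F = sets borel \<and> finite_measure F \<and> emeasure F (- {-pi..pi}) = 0 \<and>
     (\<forall>A\<in>sets borel. emeasure F (uminus ` A) = emeasure F A) \<and>
     (\<forall>j\<ge>1. \<forall>k\<ge>1. complex_of_real (covariance M (X j) (X k)) =
        integral\<^sup>L F (\<lambda>t. cis (t * (real k - real j))))"

end

theory Submission
  imports Defs
begin

text \<open>
  The variance of \<open>S\<^sub>m\<close> is the integral against \<open>F\<close> of the kernel
  \<open>K\<^sub>m(t) = |\<Sum>\<^sub>j\<^sub>=\<^sub>1\<^sup>m e\<^sup>i\<^sup>j\<^sup>t|\<^sup>2\<close>.  Since \<open>K\<^sub>m \<ge> m\<^sup>2/2\<close> on \<open>[-1/m,1/m]\<close> and \<open>K\<^sub>m(t) \<le> 128/t\<^sup>2\<close>,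
  writing \<open>G(x) = F([-x,x])\<close> we obtain the two-sided comparison
    \<open>m\<^sup>2 G(1/m)/2 \<le> Var(S\<^sub>m) \<le> \<Sum>\<^sub>j 512 m\<^sup>2 4\<^sup>-\<^sup>j G(2\<^sup>j/m)\<close>.
  The lower bound together with bracketing \<open>1/x\<close> between consecutive \<open>n\<^sub>k\<close> gives (1) \<open>\<Rightarrow>\<close> (2);
  the upper bound, a Potter-type bound \<open>L(m/2\<^sup>j) \<le> 2\<^sup>\<delta>\<^sup>j L(m)\<close> and the power lower bound
  \<open>L(m) \<ge> c m\<^sup>-\<^sup>\<delta>\<close> (with \<open>\<gamma> = 2\<delta>\<close>) make the dyadic sum geometric, giving (2) \<open>\<Rightarrow>\<close> (3);
  (3) \<open>\<Rightarrow>\<close> (1) is immediate.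
\<close>

subsection \<open>The variance kernel\<close>

text \<open>The kernel whose integral against the spectral measure gives the variance of a partial sum:
  it equals the squared modulus of the exponential sum \<open>\<Sum>j=1..m. e\<^sup>i\<^sup>j\<^sup>t\<close>.\<close>

definition variance_kernel :: "nat \<Rightarrow> real \<Rightarrow> real" where
  "variance_kernel m t = (\<Sum>j=1..m. \<Sum>k=1..m. cos (t * (real k - real j)))"

lemma variance_kernel_eq_sum_squares:
  "variance_kernel m t = (\<Sum>j=1..m. cos (t * real j))\<^sup>2 + (\<Sum>j=1..m. sin (t * real j))\<^sup>2"
  unfolding variance_kernel_def power2_eq_square sum_product
  by (simp add: right_diff_distrib cos_diff sum.distrib[symmetric]
      sum.swap[of _ "{1..m}" "{1..m}"] mult.commute)

lemma variance_kernel_nonneg: "0 \<le> variance_kernel m t"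
  unfolding variance_kernel_eq_sum_squares by simp

lemma variance_kernel_le_square: "variance_kernel m t \<le> real m ^ 2"
proof -
  have "variance_kernel m t \<le> (\<Sum>j=1..m. \<Sum>k=1..m. (1::real))"
    unfolding variance_kernel_def by (intro sum_mono) simp
  then show ?thesis by (simp add: power2_eq_square)
qed

lemma continuous_variance_kernel: "continuous_on UNIV (variance_kernel m)"
  unfolding variance_kernel_def[abs_def] by (intro continuous_intros)

lemma cos_ge_one_minus_half_square: "1 - x\<^sup>2 / 2 \<le> cos (x::real)"
proof -
  have "cos x = 1 - 2 * (sin (x/2))\<^sup>2"
    using cos_double_sin[of "x/2"] by simp
  moreover have "(sin (x/2))\<^sup>2 \<le> (x/2)\<^sup>2"
    using abs_sin_x_le_abs_x[of "x/2"] by (metis abs_ge_zero power2_abs power_mono)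
  ultimately show ?thesis by (simp add: power_divide)
qed

lemma sin_ge_quarter: fixes y :: real assumes "0 \<le> y" "y \<le> 2" shows "y / 4 \<le> sin y"
proof -
  have "\<bar>sin y - (\<Sum>m<3. sin_coeff m * y ^ m)\<bar> \<le> inverse (fact 3) * \<bar>y\<bar> ^ 3"
    by (rule Maclaurin_sin_bound)
  moreover have "(\<Sum>m<3. sin_coeff m * y ^ m) = y"
    by (simp add: numeral_3_eq_3 sin_coeff_Suc cos_coeff_def)
  moreover have "fact 3 = (6::real)" by (simp add: numeral_3_eq_3)
  ultimately have "\<bar>sin y - y\<bar> \<le> y^3 / 6"
    using assms by simp
  then have "y - y^3/6 \<le> sin y" by linarith
  moreover have "y * y^2 \<le> y * 4"
    using assms power_mono[of y 2 2] by (intro mult_left_mono) auto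
  then have "y^3 \<le> 4 * y" by (simp add: power2_eq_square power3_eq_cube)
  ultimately show ?thesis using assms by linarith
qed

text \<open>Near the origin (\<open>|t| \<le> 1/m\<close>) every summand of the kernel is at least \<open>1/2\<close>.\<close>

lemma variance_kernel_lower:
  assumes "\<bar>t\<bar> * real m \<le> 1"
  shows "real m ^ 2 / 2 \<le> variance_kernel m t"
proof -
  have "(\<Sum>j=1..m. \<Sum>k=1..m. (1/2::real)) \<le> variance_kernel m t"
    unfolding variance_kernel_def
  proof (intro sum_mono)
    fix j k assume "j \<in> {1..m}" "k \<in> {1..m}"
    then have "\<bar>real k - real j\<bar> \<le> real m" by auto
    then have "\<bar>t * (real k - real j)\<bar> \<le> \<bar>t\<bar> * real m"
      by (simp add: abs_mult mult_left_mono)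
    then have "\<bar>t * (real k - real j)\<bar> \<le> 1" using assms by linarith
    then have "(t * (real k - real j))\<^sup>2 \<le> 1"
      by (metis abs_le_square_iff abs_one power_one)
    then show "1/2 \<le> cos (t * (real k - real j))"
      using cos_ge_one_minus_half_square[of "t * (real k - real j)"] by linarith
  qed
  then show ?thesis by (simp add: power2_eq_square)
qed

text \<open>Dirichlet-type summation: multiplying by \<open>2 sin (t/2)\<close> telescopes the trigonometric sums.\<close>

lemma sin_half_times_cos_sum:
  "2 * sin (t/2) * (\<Sum>j=1..m. cos (t * real j)) = sin ((real m + 1/2) * t) - sin (t/2)"
proof (induction m)
  case (Suc m)
  have "(real m + 1 + 1/2) * t = t * real (Suc m) + t/2"
    and "(real m + 1/2) * t = t * real (Suc m) - t/2" by (simp_all add: algebra_simps)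
  then have "2 * sin (t/2) * cos (t * real (Suc m))
      = sin ((real m + 1 + 1/2) * t) - sin ((real m + 1/2) * t)"
    by (simp add: sin_add sin_diff)
  with Suc show ?case by (simp add: distrib_left del: of_nat_Suc) (simp add: algebra_simps)
qed simp

lemma sin_half_times_sin_sum:
  "2 * sin (t/2) * (\<Sum>j=1..m. sin (t * real j)) = cos (t/2) - cos ((real m + 1/2) * t)"
proof (induction m)
  case (Suc m)
  have "(real m + 1 + 1/2) * t = t * real (Suc m) + t/2"
    and "(real m + 1/2) * t = t * real (Suc m) - t/2" by (simp_all add: algebra_simps)
  then have "2 * sin (t/2) * sin (t * real (Suc m))
      = cos ((real m + 1/2) * t) - cos ((real m + 1 + 1/2) * t)"
    by (simp add: cos_add cos_diff)
  with Suc show ?case by (simp add: distrib_left del: of_nat_Suc) (simp add: algebra_simps)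
qed simp

lemma abs_sin_half_ge:
  assumes "\<bar>t\<bar> \<le> pi"
  shows "\<bar>t\<bar> / 8 \<le> \<bar>sin (t/2)\<bar>"
proof -
  have "\<bar>t\<bar>/2 \<le> 2" using assms pi_less_4 by linarith
  then have "(\<bar>t\<bar>/2) / 4 \<le> sin (\<bar>t\<bar>/2)" by (intro sin_ge_quarter) auto
  moreover have "sin (\<bar>t\<bar>/2) = \<bar>sin (t/2)\<bar>"
    using assms sin_ge_zero[of "\<bar>t\<bar>/2"] by (cases "t \<ge> 0") auto
  ultimately show ?thesis by simp
qed

lemma square_le_of_sin_half_bound:
  assumes "\<bar>t\<bar> \<le> pi" "t \<noteq> 0" "\<bar>2 * sin (t/2) * a\<bar> \<le> 2"
  shows "a\<^sup>2 \<le> 64 / t\<^sup>2"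
proof -
  have "\<bar>t\<bar> / 8 * \<bar>a\<bar> \<le> \<bar>sin (t/2)\<bar> * \<bar>a\<bar>"
    using abs_sin_half_ge[OF assms(1)] by (intro mult_right_mono) auto
  also have "\<dots> \<le> 1" using assms(3) by (simp add: abs_mult)
  finally have "\<bar>a\<bar> \<le> 8 / \<bar>t\<bar>" using assms(2) by (simp add: field_simps)
  then have "\<bar>a\<bar>\<^sup>2 \<le> (8 / \<bar>t\<bar>)\<^sup>2" by (intro power_mono) auto
  then show ?thesis by (simp add: power_divide)
qed

lemma variance_kernel_upper:
  assumes "t \<noteq> 0" "\<bar>t\<bar> \<le> pi"
  shows "variance_kernel m t \<le> 128 / t\<^sup>2"
proof -
  have "\<bar>2 * sin (t/2) * (\<Sum>j=1..m. cos (t * real j))\<bar> \<le> 2"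
    unfolding sin_half_times_cos_sum
    using abs_sin_le_one[of "(real m + 1/2) * t"] abs_sin_le_one[of "t/2"] by linarith
  moreover have "\<bar>2 * sin (t/2) * (\<Sum>j=1..m. sin (t * real j))\<bar> \<le> 2"
    unfolding sin_half_times_sin_sum
    using abs_cos_le_one[of "(real m + 1/2) * t"] abs_cos_le_one[of "t/2"] by linarith
  ultimately have "(\<Sum>j=1..m. cos (t * real j))\<^sup>2 \<le> 64 / t\<^sup>2"
    and "(\<Sum>j=1..m. sin (t * real j))\<^sup>2 \<le> 64 / t\<^sup>2"
    using square_le_of_sin_half_bound[OF assms(2,1)] by blast+
  then show ?thesis unfolding variance_kernel_eq_sum_squares by simp
qed

subsection \<open>Spectral representation of the variance\<close>

text \<open>Products of square-integrable functions are integrable, since \<open>|xy| \<le> x\<^sup>2 + y\<^sup>2\<close>.\<close>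

lemma integrable_mult_of_square_integrable:
  fixes f g :: "'a \<Rightarrow> real"
  assumes "f \<in> borel_measurable M" "g \<in> borel_measurable M"
    and "integrable M (\<lambda>x. (f x)\<^sup>2)" "integrable M (\<lambda>x. (g x)\<^sup>2)"
  shows "integrable M (\<lambda>x. f x * g x)"
proof (rule Bochner_Integration.integrable_bound)
  show "integrable M (\<lambda>x. (f x)\<^sup>2 + (g x)\<^sup>2)" using assms by auto
  show "AE x in M. norm (f x * g x) \<le> norm ((f x)\<^sup>2 + (g x)\<^sup>2)"
  proof (intro AE_I2)
    fix x
    have "2 * \<bar>f x\<bar> * \<bar>g x\<bar> \<le> (f x)\<^sup>2 + (g x)\<^sup>2"
      using sum_squares_bound[of "\<bar>f x\<bar>" "\<bar>g x\<bar>"] by simp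
    moreover have "0 \<le> \<bar>f x\<bar> * \<bar>g x\<bar>" by simp
    ultimately have "\<bar>f x\<bar> * \<bar>g x\<bar> \<le> (f x)\<^sup>2 + (g x)\<^sup>2" by linarith
    then show "norm (f x * g x) \<le> norm ((f x)\<^sup>2 + (g x)\<^sup>2)"
      by (simp add: abs_mult)
  qed
qed (use assms in auto)

text \<open>Since the spectral measure is real, the covariances are integrals of cosines.\<close>

lemma covariance_eq_cos_integral:
  assumes spec: "spectral_measure_of M X F" and "j \<ge> 1" "k \<ge> 1"
  shows "covariance M (X j) (X k) = integral\<^sup>L F (\<lambda>t. cos (t * (real k - real j)))"
proof -
  have sF: "sets F = sets borel" and fF: "finite_measure F"
    using spec unfolding spectral_measure_of_def by auto
  have int: "integrable F (\<lambda>t. cis (t * (real k - real j)))"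
  proof (rule finite_measure.integrable_const_bound[OF fF, where B=1])
    show "(\<lambda>t. cis (t * (real k - real j))) \<in> borel_measurable F"
      unfolding measurable_cong_sets[OF sF refl] cis_conv_exp
      by (intro borel_measurable_continuous_onI continuous_intros)
  qed simp
  have "complex_of_real (covariance M (X j) (X k))
      = integral\<^sup>L F (\<lambda>t. cis (t * (real k - real j)))"
    using spec assms unfolding spectral_measure_of_def by auto
  then have "covariance M (X j) (X k) = Re (integral\<^sup>L F (\<lambda>t. cis (t * (real k - real j))))"
    by (metis Re_complex_of_real)
  then show ?thesis using integral_Re[OF int] by simp
qed

lemma variance_sum_eq_kernel_integral:
  assumes "prob_space M"
    and meas: "\<And>i. i \<ge> 1 \<Longrightarrow> X i \<in> borel_measurable M"
    and sq: "\<And>i. i \<ge> 1 \<Longrightarrow> integrable M (\<lambda>\<omega>. (X i \<omega>)\<^sup>2)"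
    and mean: "\<And>i. i \<ge> 1 \<Longrightarrow> integral\<^sup>L M (X i) = 0"
    and spec: "spectral_measure_of M X F"
  shows "prob_space.variance M (\<lambda>\<omega>. \<Sum>i=1..m. X i \<omega>) = integral\<^sup>L F (variance_kernel m)"
proof -
  interpret prob_space M by fact
  have sF: "sets F = sets borel" and fF: "finite_measure F"
    using spec unfolding spectral_measure_of_def by auto
  have int: "integrable M (X i)" if "i \<ge> 1" for i
    using square_integrable_imp_integrable[OF meas[OF that] sq[OF that]] .
  have prod: "integrable M (\<lambda>\<omega>. X j \<omega> * X k \<omega>)" if "j \<ge> 1" "k \<ge> 1" for j k
    using that by (intro integrable_mult_of_square_integrable meas sq)
  have cos: "integrable F (\<lambda>t. cos (t * (real k - real j)))" for j k
  proof (rule finite_measure.integrable_const_bound[OF fF, where B=1])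
    show "(\<lambda>t. cos (t * (real k - real j))) \<in> borel_measurable F"
      unfolding measurable_cong_sets[OF sF refl] by measurable
  qed simp
  have "expectation (\<lambda>\<omega>. \<Sum>i=1..m. X i \<omega>) = 0"
    using int mean by (simp add: Bochner_Integration.integral_sum)
  then have "variance (\<lambda>\<omega>. \<Sum>i=1..m. X i \<omega>)
      = expectation (\<lambda>\<omega>. \<Sum>j=1..m. \<Sum>k=1..m. X j \<omega> * X k \<omega>)"
    by (simp add: power2_eq_square sum_product)
  also have "\<dots> = (\<Sum>j=1..m. \<Sum>k=1..m. expectation (\<lambda>\<omega>. X j \<omega> * X k \<omega>))"
    using prod by (subst Bochner_Integration.integral_sum)
      (auto intro!: sum.cong Bochner_Integration.integral_sum)
  also have "\<dots> = (\<Sum>j=1..m. \<Sum>k=1..m. integral\<^sup>L F (\<lambda>t. cos (t * (real k - real j))))"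
    using mean covariance_eq_cos_integral[OF spec]
    by (intro sum.cong refl) (simp add: covariance_def)
  also have "\<dots> = integral\<^sup>L F (variance_kernel m)"
    unfolding variance_kernel_def using cos by (simp add: Bochner_Integration.integral_sum)
  finally show ?thesis .
qed

definition spectral_mass :: "real measure \<Rightarrow> real \<Rightarrow> real" where
  "spectral_mass F x = measure F {-x..x}"

text \<open>Dyadic majorant of the kernel: off \<open>[-1/m,1/m]\<close>, the bound \<open>128/t\<^sup>2\<close> is dominated by the
  term for the smallest dyadic interval \<open>[-2\<^sup>j/m, 2\<^sup>j/m]\<close> containing \<open>t\<close>.\<close>

lemma variance_kernel_dyadic:
  assumes m: "m \<ge> 1" and t: "\<bar>t\<bar> \<le> pi"
  shows "\<bar>t\<bar> \<le> 2^i / real m \<Longrightarrow> variance_kernel m t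
           \<le> (\<Sum>j\<le>i. 512 * real m ^ 2 / 4^j * indicator {-(2^j / real m)..2^j / real m} t)"
proof (induction i)
  case 0
  have "variance_kernel m t \<le> 512 * real m ^ 2"
    using variance_kernel_le_square[of m t] zero_le_power2[of "real m"] by linarith
  with 0 show ?case by (simp add: abs_le_iff)
next
  case (Suc i)
  let ?term = "\<lambda>j. 512 * real m ^ 2 / 4^j * indicator {-(2^j / real m)..2^j / real m} t :: real"
  show ?case
  proof (cases "\<bar>t\<bar> \<le> 2^i / real m")
    case True
    have "0 \<le> ?term (Suc i)" by simp
    then show ?thesis using Suc.IH[OF True] by (simp only: sum.atMost_Suc)
  next
    case False
    then have lt: "2^i / real m < \<bar>t\<bar>" by simp
    then have "t \<noteq> 0"
      by (metis abs_zero divide_nonneg_nonneg not_less of_nat_0_le_iff zero_le_numeral zero_le_power)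
    have "4^i / real m ^ 2 = (2^i / real m)^2"
      by (simp add: power_divide power2_eq_square flip: power_mult_distrib)
    also have "\<dots> \<le> \<bar>t\<bar>^2"
      using lt by (intro power_mono) auto
    finally have "4^i / real m ^ 2 \<le> t^2" by simp
    then have "128 / t^2 \<le> 128 / (4^i / real m ^ 2)"
      using m \<open>t \<noteq> 0\<close> by (intro divide_left_mono) auto
    also have "\<dots> = 512 * real m ^ 2 / 4^(Suc i)" by simp
    also have "\<dots> = ?term (Suc i)"
      using Suc.prems by (simp add: indicator_def abs_le_iff)
    finally have "variance_kernel m t \<le> ?term (Suc i)"
      using variance_kernel_upper[OF \<open>t \<noteq> 0\<close> t, of m] by linarith
    also have "\<dots> \<le> (\<Sum>j\<le>Suc i. ?term j)"
      by (rule member_le_sum) auto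
    finally show ?thesis .
  qed
qed

lemma integrable_variance_kernel:
  assumes "sets F = sets borel" "finite_measure F"
  shows "integrable F (variance_kernel m)"
proof (rule finite_measure.integrable_const_bound[OF assms(2), where B="real m ^ 2"])
  show "variance_kernel m \<in> borel_measurable F"
    unfolding measurable_cong_sets[OF assms(1) refl]
    by (rule borel_measurable_continuous_onI[OF continuous_variance_kernel])
qed (simp add: variance_kernel_le_square variance_kernel_nonneg)

lemma integrable_indicator_interval:
  fixes F :: "real measure" and a b c :: real
  assumes "sets F = sets borel" "finite_measure F"
  shows "integrable F (\<lambda>t. c * indicator {a..b} t :: real)"
proof -
  have "space F = UNIV" using sets_eq_imp_space_eq[OF assms(1)] by simp
  moreover have "emeasure F {a..b} \<noteq> \<infinity>"
    using finite_measure.emeasure_finite[OF assms(2), of "{a..b}"] by simp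
  ultimately have "integrable F (indicator {a..b} :: real \<Rightarrow> real)"
    using assms(1) by (simp add: integrable_indicator_iff less_top)
  then show ?thesis by (rule integrable_mult_right)
qed

lemma kernel_integral_lower:
  assumes sF: "sets F = sets borel" and fF: "finite_measure F"
  shows "real m ^ 2 / 2 * spectral_mass F (1 / real m) \<le> integral\<^sup>L F (variance_kernel m)"
proof -
  have "real m ^ 2 / 2 * spectral_mass F (1 / real m)
      = integral\<^sup>L F (\<lambda>t. real m ^ 2 / 2 * indicator {-(1/real m)..1/real m} t)"
    using sets_eq_imp_space_eq[OF sF] by (simp add: spectral_mass_def)
  also have "\<dots> \<le> integral\<^sup>L F (variance_kernel m)"
  proof (rule integral_mono[OF integrable_indicator_interval[OF sF fF]
        integrable_variance_kernel[OF sF fF]])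
    fix t
    show "real m ^ 2 / 2 * indicator {-(1/real m)..1/real m} t \<le> variance_kernel m t"
    proof (cases "\<bar>t\<bar> * real m \<le> 1")
      case True
      then show ?thesis using variance_kernel_lower[OF True] variance_kernel_nonneg[of m t]
        by (simp add: indicator_def)
    next
      case False
      have "t \<notin> {-(1/real m)..1/real m}"
      proof
        assume "t \<in> {-(1/real m)..1/real m}"
        then have "\<bar>t\<bar> \<le> 1 / real m" by auto
        then have "\<bar>t\<bar> * real m \<le> 1" by (cases "m = 0") (simp_all add: field_simps)
        with False show False by simp
      qed
      then show ?thesis using variance_kernel_nonneg[of m t] by simp
    qed
  qed
  finally show ?thesis .
qed

text \<open>Upper bound \<open>\<integral> K\<^sub>m dF \<le> \<Sum>\<^sub>j 512 m\<^sup>2 4\<^sup>-\<^sup>j G(2\<^sup>j/m)\<close>, obtained by integrating the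
  dyadic majorant; \<open>j \<le> m + 2\<close> suffices because \<open>F\<close> lives on \<open>[-\<pi>,\<pi>]\<close>.\<close>

lemma kernel_integral_upper:
  assumes sF: "sets F = sets borel" and fF: "finite_measure F"
    and supp: "emeasure F (- {-pi..pi}) = 0" and m: "m \<ge> 1"
  shows "integral\<^sup>L F (variance_kernel m)
           \<le> (\<Sum>j\<le>m+2. 512 * real m ^ 2 / 4^j * spectral_mass F (2^j / real m))"
proof -
  let ?ind = "\<lambda>j t. indicator {-(2^j / real m)..2^j / real m} t :: real"
  have "real m < 2^m" using less_exp[of m] by (metis of_nat_less_iff of_nat_numeral of_nat_power)
  moreover have "pi * real m \<le> 4 * real m" using pi_less_4 by (intro mult_right_mono) auto
  ultimately have "pi * real m \<le> 4 * 2^m" by linarith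
  then have big: "pi \<le> 2^(m+2) / real m" using m by (simp add: field_simps)
  have "AE t in F. t \<in> {-pi..pi}"
    by (rule AE_I[where N="- {-pi..pi}"]) (use supp sF in auto)
  then have "AE t in F. variance_kernel m t \<le> (\<Sum>j\<le>m+2. 512 * real m ^ 2 / 4^j * ?ind j t)"
  proof eventually_elim
    case (elim t)
    then have "\<bar>t\<bar> \<le> pi" by auto
    then show ?case by (rule variance_kernel_dyadic[OF m]) (use big \<open>\<bar>t\<bar> \<le> pi\<close> in linarith)
  qed
  then have "integral\<^sup>L F (variance_kernel m)
      \<le> integral\<^sup>L F (\<lambda>t. \<Sum>j\<le>m+2. 512 * real m ^ 2 / 4^j * ?ind j t)"
    by (intro integral_mono_AE integrable_variance_kernel[OF sF fF]
        Bochner_Integration.integrable_sum integrable_indicator_interval[OF sF fF])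
  also have "\<dots> = (\<Sum>j\<le>m+2. integral\<^sup>L F (\<lambda>t. 512 * real m ^ 2 / 4^j * ?ind j t))"
    by (rule Bochner_Integration.integral_sum) (rule integrable_indicator_interval[OF sF fF])
  also have "\<dots> = (\<Sum>j\<le>m+2. 512 * real m ^ 2 / 4^j * spectral_mass F (2^j / real m))"
    using sets_eq_imp_space_eq[OF sF] by (intro sum.cong refl) (simp add: spectral_mass_def)
  finally show ?thesis .
qed

subsection \<open>Slowly varying functions\<close>

lemma slowly_varying_pos: "slowly_varying L \<Longrightarrow> x > 0 \<Longrightarrow> L x > 0"
  unfolding slowly_varying_def by auto

text \<open>In logarithmic coordinates \<open>h(u) = ln L(e\<^sup>u)\<close>, slow variation says \<open>h(u + a) - h(u) \<rightarrow> 0\<close>.\<close>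

definition log_profile :: "(real \<Rightarrow> real) \<Rightarrow> real \<Rightarrow> real" where
  "log_profile L u = ln (L (exp u))"

lemma log_profile_increment_tendsto:
  assumes "slowly_varying L"
  shows "((\<lambda>u. log_profile L (u + a) - log_profile L u) \<longlongrightarrow> 0) at_top"
proof -
  have lim: "((\<lambda>x. L (exp a * x) / L x) \<longlongrightarrow> 1) at_top"
    using assms unfolding slowly_varying_def by auto
  have "((\<lambda>u. ln (L (exp a * exp u) / L (exp u))) \<longlongrightarrow> ln 1) at_top"
    using filterlim_compose[OF lim exp_at_top] by (intro tendsto_ln) (simp_all add: o_def)
  moreover have "ln (L (exp a * exp u) / L (exp u)) = log_profile L (u + a) - log_profile L u" for u
    using slowly_varying_pos[OF assms, of "exp u"] slowly_varying_pos[OF assms, of "exp a * exp u"]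
    by (simp add: log_profile_def ln_div exp_add mult.commute)
  ultimately show ?thesis by simp
qed

text \<open>Uniform convergence theorem, in the weak form needed here: a measurable \<open>h\<close> whose
  increments over every fixed step tend to \<open>0\<close> has uniformly bounded increments over steps
  in \<open>[0,1]\<close> eventually.  The proof (Csiszar and Erdos) measures the set of \<open>s \<in> [0,2]\<close> where
  \<open>h\<close> moves by at least \<open>1\<close> between \<open>W\<close> and \<open>W + s\<close>; by dominated convergence its measure
  tends to \<open>0\<close>, while a large increment at a point forces measure at least \<open>1\<close>.\<close>

definition large_increment :: "(real \<Rightarrow> real) \<Rightarrow> real \<Rightarrow> real \<Rightarrow> real" where
  "large_increment h W s = (if s \<in> {0..2} \<and> 1 \<le> \<bar>h (W + s) - h W\<bar> then 1 else 0)"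

lemma integrable_large_increment:
  fixes h :: "real \<Rightarrow> real"
  assumes [measurable]: "h \<in> borel_measurable borel"
  shows "integrable lborel (large_increment h W)"
proof (rule Bochner_Integration.integrable_bound)
  show "integrable lborel (indicator {0..2::real} :: real \<Rightarrow> real)"
    by (simp add: integrable_indicator_iff)
  show "large_increment h W \<in> borel_measurable lborel"
    unfolding large_increment_def by measurable
qed (auto simp: large_increment_def indicator_def)

lemma integral_large_increment_tendsto_zero:
  fixes h :: "real \<Rightarrow> real" and W :: "nat \<Rightarrow> real"
  assumes [measurable]: "h \<in> borel_measurable borel"
    and incr: "\<And>s. ((\<lambda>u. h (u + s) - h u) \<longlongrightarrow> 0) at_top"
    and W: "filterlim W at_top sequentially"
  shows "(\<lambda>k. integral\<^sup>L lborel (large_increment h (W k))) \<longlonglongrightarrow> 0"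
proof -
  have lim: "AE s in lborel. (\<lambda>k. large_increment h (W k) s) \<longlonglongrightarrow> 0"
  proof (intro AE_I2)
    fix s
    have "eventually (\<lambda>k. dist (h (W k + s) - h (W k)) 0 < 1) sequentially"
      using filterlim_compose[OF incr[of s] W] by (intro tendstoD) (simp_all add: o_def)
    then have "eventually (\<lambda>k. large_increment h (W k) s = 0) sequentially"
      by eventually_elim (auto simp: large_increment_def dist_real_def)
    then show "(\<lambda>k. large_increment h (W k) s) \<longlonglongrightarrow> 0" by (rule tendsto_eventually)
  qed
  have bound: "AE s in lborel. norm (large_increment h (W k) s) \<le> indicator {0..2} s" for k
    by (intro AE_I2) (auto simp: large_increment_def indicator_def)
  have "(\<lambda>k. integral\<^sup>L lborel (large_increment h (W k))) \<longlonglongrightarrow> integral\<^sup>L lborel (\<lambda>s. 0::real)"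
    using Bochner_Integration.integral_dominated_convergence[of "\<lambda>s. 0" lborel
        "\<lambda>k. large_increment h (W k)" "indicator {0..2}", OF _ _ _ lim bound]
      integrable_large_increment[OF assms(1)] by (simp add: integrable_indicator_iff)
  then show ?thesis by simp
qed

text \<open>An increment larger than \<open>2\<close> from \<open>U\<close> to \<open>U + a\<close> forces, for every \<open>s \<in> [1,2]\<close>,
  an increment of at least \<open>1\<close> either from \<open>U\<close> or from \<open>U + a\<close> to \<open>U + s\<close>.\<close>

lemma large_increment_cover:
  fixes h :: "real \<Rightarrow> real"
  assumes meas: "h \<in> borel_measurable borel"
    and a: "a \<in> {0..1}" and big: "2 < \<bar>h (U + a) - h U\<bar>"
  shows "1 \<le> integral\<^sup>L lborel (large_increment h U) + integral\<^sup>L lborel (large_increment h (U + a))"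
proof -
  let ?f = "\<lambda>s. large_increment h U s + large_increment h (U + a) (s - a)"
  have int_shift: "integrable lborel (\<lambda>s. large_increment h (U + a) (s - a))"
    using lborel_integrable_real_affine[OF integrable_large_increment[OF meas, of "U + a"], of 1 "-a"] by simp
  have cover: "indicator {1..2} s \<le> ?f s" for s
  proof (cases "s \<in> {1..2}")
    case True
    have "1 \<le> \<bar>h (U + s) - h U\<bar> \<or> 1 \<le> \<bar>h (U + s) - h (U + a)\<bar>"
      using big by linarith
    with True a show ?thesis by (auto simp: large_increment_def indicator_def algebra_simps)
  qed (auto simp: indicator_def large_increment_def)
  have "1 = integral\<^sup>L lborel (indicator {1..2::real} :: real \<Rightarrow> real)" by simp
  also have "\<dots> \<le> integral\<^sup>L lborel ?f"
    using cover int_shift integrable_large_increment[OF meas]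
    by (intro integral_mono) (simp_all add: integrable_indicator_iff)
  also have "\<dots> = integral\<^sup>L lborel (large_increment h U) + integral\<^sup>L lborel (large_increment h (U + a))"
    using int_shift integrable_large_increment[OF meas]
      lborel_integral_real_affine[of 1 "large_increment h (U + a)" "-a"] by simp
  finally show ?thesis .
qed

lemma uniform_increment_bound:
  fixes h :: "real \<Rightarrow> real"
  assumes [measurable]: "h \<in> borel_measurable borel"
    and incr: "\<And>s. ((\<lambda>u. h (u + s) - h u) \<longlongrightarrow> 0) at_top"
  shows "\<exists>A. \<forall>u\<ge>A. \<forall>a\<in>{0..1}. \<bar>h (u + a) - h u\<bar> \<le> 2"
proof (rule ccontr)
  assume "\<not> ?thesis"
  then have "\<forall>k::nat. \<exists>u a. u \<ge> real k \<and> a \<in> {0..1} \<and> 2 < \<bar>h (u + a) - h u\<bar>"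
    by (force simp: not_le)
  then obtain U a where Uk: "\<And>k. U k \<ge> real k" and ak: "\<And>k. a k \<in> {0..1}"
    and big: "\<And>k. 2 < \<bar>h (U k + a k) - h (U k)\<bar>"
    by metis
  have "filterlim U at_top sequentially"
    by (rule filterlim_at_top_mono[OF filterlim_real_sequentially]) (use Uk in auto)
  moreover have "filterlim (\<lambda>k. U k + a k) at_top sequentially"
    by (rule filterlim_at_top_mono[OF filterlim_real_sequentially])
      (use Uk ak in \<open>auto intro!: always_eventually simp: add_increasing2\<close>)
  ultimately have "(\<lambda>k. integral\<^sup>L lborel (large_increment h (U k))
      + integral\<^sup>L lborel (large_increment h (U k + a k))) \<longlonglongrightarrow> 0 + 0"
    by (intro tendsto_add integral_large_increment_tendsto_zero incr) simp_all
  then have "eventually (\<lambda>k. integral\<^sup>L lborel (large_increment h (U k))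
      + integral\<^sup>L lborel (large_increment h (U k + a k)) < 1) sequentially"
    by (rule order_tendstoD(2)) simp_all
  then obtain k where "integral\<^sup>L lborel (large_increment h (U k))
      + integral\<^sup>L lborel (large_increment h (U k + a k)) < 1"
    by (auto simp: eventually_sequentially)
  with large_increment_cover[OF assms(1) ak big, of k] show False by linarith
qed

lemma slowly_varying_ratio_bound:
  assumes sv: "slowly_varying L"
  shows "\<exists>A>0. \<forall>y\<ge>A. \<forall>l. 1 \<le> l \<and> l \<le> 2 \<longrightarrow> L y \<le> exp 2 * L (l * y)"
proof -
  have [measurable]: "L \<in> borel_measurable borel" using sv unfolding slowly_varying_def by auto
  have "log_profile L \<in> borel_measurable borel" unfolding log_profile_def[abs_def] by measurable
  then obtain A0 where A0: "\<And>u a. u \<ge> A0 \<Longrightarrow> a \<in> {0..1} \<Longrightarrow>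
      \<bar>log_profile L (u + a) - log_profile L u\<bar> \<le> 2"
    using uniform_increment_bound log_profile_increment_tendsto[OF sv] by blast
  define A where "A = max 1 (exp A0)"
  have "L y \<le> exp 2 * L (l * y)" if y: "y \<ge> A" and l: "1 \<le> l" "l \<le> 2" for y l
  proof -
    have "y > 0" and "ln y \<ge> A0" using y by (auto simp: A_def ln_ge_iff)
    moreover have "ln l \<in> {0..1}"
    proof -
      have "ln l \<le> ln 2" using l by simp
      then have "ln l \<le> 1" using ln_2_less_1 by linarith
      then show ?thesis using l by simp
    qed
    ultimately have "\<bar>log_profile L (ln y + ln l) - log_profile L (ln y)\<bar> \<le> 2" by (intro A0)
    then have "ln (L y) \<le> 2 + ln (L (l * y))"
      using \<open>y > 0\<close> l by (simp add: log_profile_def exp_add mult.commute)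
    then have "exp (ln (L y)) \<le> exp (2 + ln (L (l * y)))" by simp
    then show ?thesis
      using slowly_varying_pos[OF sv, of y] slowly_varying_pos[OF sv, of "l * y"] \<open>y > 0\<close> l
      by (simp add: exp_add)
  qed
  moreover have "A > 0" unfolding A_def by simp
  ultimately show ?thesis by blast
qed

lemma slowly_varying_iterated_ratio:
  assumes sv: "slowly_varying L" and A: "A > 0"
    and ratio: "\<forall>y\<ge>A. \<forall>l. 1 \<le> l \<and> l \<le> 2 \<longrightarrow> L y \<le> exp 2 * L (l * y)"
  shows "y \<ge> A \<Longrightarrow> 1 \<le> \<mu> \<Longrightarrow> \<mu> \<le> 2^j \<Longrightarrow> L y \<le> exp 2 ^ j * L (\<mu> * y)"
proof (induction j arbitrary: y \<mu>)
  case (Suc j)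
  show ?case
  proof (cases "\<mu> \<le> 2")
    case True
    then have "L y \<le> exp 2 * L (\<mu> * y)" using ratio Suc.prems by blast
    also have "\<dots> \<le> exp 2 ^ Suc j * L (\<mu> * y)"
      using slowly_varying_pos[OF sv, of "\<mu> * y"] Suc.prems A
      by (intro mult_right_mono) (simp_all add: one_le_power)
    finally show ?thesis .
  next
    case False
    have "L y \<le> exp 2 * L (2 * y)" using ratio Suc.prems by auto
    also have "L (2 * y) \<le> exp 2 ^ j * L ((\<mu> / 2) * (2 * y))"
      using Suc.IH[of "2 * y" "\<mu> / 2"] Suc.prems False A by auto
    finally show ?thesis by (simp add: mult_ac)
  qed
qed simp

lemma slowly_varying_halving_bound:
  assumes sv: "slowly_varying L" and d: "\<delta> > 0"
  shows "\<exists>A>0. \<forall>i y. A \<le> y / 2^i \<longrightarrow> L (y / 2^i) \<le> 2 powr (\<delta> * real i) * L y"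
proof -
  have "((\<lambda>x. L (2 * x) / L x) \<longlongrightarrow> 1) at_top" using sv unfolding slowly_varying_def by auto
  moreover have "2 powr (-\<delta>) < (1::real)" using d by (simp add: powr_less_one)
  ultimately have "eventually (\<lambda>x. 2 powr (-\<delta>) < L (2 * x) / L x) at_top"
    by (rule order_tendstoD(1))
  then obtain A0 where A0: "\<And>x. x \<ge> A0 \<Longrightarrow> 2 powr (-\<delta>) < L (2 * x) / L x"
    unfolding eventually_at_top_linorder by blast
  define A where "A = max A0 1"
  have doubling: "L z \<le> 2 powr \<delta> * L (2 * z)" if "z \<ge> A" for z
  proof -
    have "z > 0" and "2 powr (-\<delta>) * L z < L (2 * z)"
      using that A0[of z] slowly_varying_pos[OF sv, of z] by (auto simp: A_def less_divide_eq)
    then show ?thesis by (simp add: powr_minus field_simps)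
  qed
  have "A \<le> y / 2^i \<longrightarrow> L (y / 2^i) \<le> 2 powr (\<delta> * real i) * L y" for i y
  proof (induction i)
    case (Suc i)
    show ?case
    proof
      assume h: "A \<le> y / 2 ^ Suc i"
      moreover have "0 \<le> y / 2 ^ Suc i" using h max.cobounded2[of A0 1] unfolding A_def by linarith
      moreover have "y / 2^i = 2 * (y / 2 ^ Suc i)" by simp
      ultimately have "A \<le> y / 2^i" by linarith
      have "L (y / 2 ^ Suc i) \<le> 2 powr \<delta> * L (2 * (y / 2 ^ Suc i))" using doubling[OF h] .
      also have "\<dots> \<le> 2 powr \<delta> * (2 powr (\<delta> * real i) * L y)"
        using Suc.IH \<open>A \<le> y / 2^i\<close> by (intro mult_left_mono) auto
      also have "\<dots> = 2 powr (\<delta> * real (Suc i)) * L y"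
        by (simp add: powr_add[symmetric] algebra_simps)
      finally show "L (y / 2 ^ Suc i) \<le> 2 powr (\<delta> * real (Suc i)) * L y" .
    qed
  qed simp
  moreover have "A > 0" unfolding A_def by simp
  ultimately show ?thesis by blast
qed

lemma dyadic_bracket:
  fixes x :: real assumes "x \<ge> 1"
  shows "\<exists>i::nat. 2^i \<le> x \<and> x < 2^(i+1)"
proof -
  define i where "i = nat \<lfloor>log 2 x\<rfloor>"
  have "0 \<le> \<lfloor>log 2 x\<rfloor>" using assms by simp
  then have "\<lfloor>log 2 x\<rfloor> = int i" by (simp add: i_def)
  then have "2 powr real i \<le> x \<and> x < 2 powr (real i + 1)"
    using floor_log_eq_powr_iff[of x 2 "int i"] assms by simp
  then show ?thesis by (auto simp: powr_realpow powr_add)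
qed

lemma slowly_varying_lower_power:
  assumes sv: "slowly_varying L" and d: "\<delta> > 0"
  shows "\<exists>c>0. \<exists>A>0. \<forall>y\<ge>A. c * y powr (-\<delta>) \<le> L y"
proof -
  obtain A1 where "A1 > 0" and ratio: "\<forall>y\<ge>A1. \<forall>l. 1 \<le> l \<and> l \<le> 2 \<longrightarrow> L y \<le> exp 2 * L (l * y)"
    using slowly_varying_ratio_bound[OF sv] by blast
  obtain A2 where halving: "\<And>i y. A2 \<le> y / 2^i \<Longrightarrow> L (y / 2^i) \<le> 2 powr (\<delta> * real i) * L y"
    using slowly_varying_halving_bound[OF sv d] by blast
  define A where "A = max A1 A2"
  define c where "c = L A / exp 2 * A powr \<delta>"
  have "A > 0" using \<open>A1 > 0\<close> by (simp add: A_def)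
  have "c * y powr (-\<delta>) \<le> L y" if y: "y \<ge> A" for y
  proof -
    obtain i :: nat where i: "2^i \<le> y / A" "y / A < 2^(i+1)"
      using dyadic_bracket[of "y / A"] y \<open>A > 0\<close> by auto
    define z where "z = y / 2^i"
    have z: "A \<le> z" "z / A \<le> 2" using i \<open>A > 0\<close> by (auto simp: z_def field_simps)
    have "A1 \<le> A" and "A2 \<le> z" using z(1) by (auto simp: A_def)
    moreover have "1 \<le> z / A" using z(1) \<open>A > 0\<close> by simp
    ultimately have "L A \<le> exp 2 * L ((z / A) * A)"
      using ratio z(2) by blast
    also have "\<dots> \<le> exp 2 * (2 powr (\<delta> * real i) * L y)"
      using halving[of y i] \<open>A2 \<le> z\<close> \<open>A > 0\<close> by (simp add: z_def)
    also have "\<dots> \<le> exp 2 * ((y / A) powr \<delta> * L y)"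
    proof -
      have "2 powr (\<delta> * real i) = (2 ^ i) powr \<delta>"
        by (simp add: powr_realpow[symmetric] powr_powr mult.commute)
      also have "\<dots> \<le> (y / A) powr \<delta>" using i(1) d by (intro powr_mono2) auto
      finally show ?thesis
        using slowly_varying_pos[OF sv, of y] y \<open>A > 0\<close> by (simp add: mult_right_mono)
    qed
    finally have "L A \<le> exp 2 * ((y / A) powr \<delta> * L y)" .
    then show ?thesis
      using y \<open>A > 0\<close> by (simp add: c_def powr_divide powr_minus field_simps)
  qed
  moreover have "c > 0" using slowly_varying_pos[OF sv \<open>A > 0\<close>] \<open>A > 0\<close> by (simp add: c_def)
  ultimately show ?thesis using \<open>A > 0\<close> by blast
qed

subsection \<open>The implications between the three growth conditions\<close>

lemma sequence_bracket:
  fixes n :: "nat \<Rightarrow> nat" and y :: real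
  assumes lim: "filterlim n at_top sequentially" and start: "real (n k0) \<le> y"
  shows "\<exists>k\<ge>k0. real (n k) \<le> y \<and> y < real (n (Suc k))"
proof -
  obtain N where "\<And>k. k \<ge> N \<Longrightarrow> nat \<lceil>y\<rceil> + 1 \<le> n k"
    using lim unfolding filterlim_at_top eventually_sequentially by blast
  then have "nat \<lceil>y\<rceil> + 1 \<le> n (max N k0)" by simp
  then have "real (nat \<lceil>y\<rceil>) + 1 \<le> real (n (max N k0))" by linarith
  moreover have "y \<le> real (nat \<lceil>y\<rceil>)" by linarith
  ultimately have "y < real (n (max N k0))" by linarith
  define k' where "k' = (LEAST k. k \<ge> k0 \<and> y < real (n k))"
  have k': "k' \<ge> k0" "y < real (n k')"
    using LeastI[of "\<lambda>k. k \<ge> k0 \<and> y < real (n k)" "max N k0"] \<open>y < real (n (max N k0))\<close>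
    by (auto simp: k'_def)
  then have "k' \<noteq> k0" using start by auto
  then obtain k where k: "k' = Suc k" "k \<ge> k0" using k' by (cases k') auto
  have "\<not> (k \<ge> k0 \<and> y < real (n k))"
    using not_less_Least[of k "\<lambda>k. k \<ge> k0 \<and> y < real (n k)"] k by (simp add: k'_def)
  then show ?thesis using k k' by auto
qed

lemma mass_bound_from_variance:
  fixes V G :: "_ \<Rightarrow> real"
  assumes low: "real m ^ 2 / 2 * G (1 / real m) \<le> V m" and up: "V m \<le> C * (real m powr \<gamma> * l)"
    and m: "m \<ge> 1"
  shows "G (1 / real m) \<le> 2 * C * (real m powr (\<gamma> - 2) * l)"
proof -
  have "G (1 / real m) \<le> 2 * C * (real m powr \<gamma> * l) / real m ^ 2"
    using low up m by (simp add: field_simps)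
  also have "real m powr \<gamma> / real m ^ 2 = real m powr (\<gamma> - 2)"
    using m by (simp add: powr_diff powr_realpow[of _ 2, simplified])
  then have "2 * C * (real m powr \<gamma> * l) / real m ^ 2 = 2 * C * (real m powr (\<gamma> - 2) * l)"
    by (metis times_divide_eq_right mult.commute mult.left_commute)
  finally show ?thesis .
qed

lemma power_times_slowly_varying_comparable:
  assumes sv: "slowly_varying L" and "A > 0"
    and ratio: "\<forall>y\<ge>A. \<forall>l. 1 \<le> l \<and> l \<le> 2 \<longrightarrow> L y \<le> exp 2 * L (l * y)"
    and "e \<le> 0" "A \<le> a" "a \<le> b" "b \<le> \<kappa> * a" "\<kappa> \<le> 2^j"
  shows "a powr e * L a \<le> \<kappa> powr (-e) * exp 2 ^ j * (b powr e * L b)"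
proof -
  have "a > 0" using assms by linarith
  then have "0 < \<kappa> * a" using assms by linarith
  then have "\<kappa> > 0" using \<open>a > 0\<close> by (simp add: zero_less_mult_iff)
  have "\<kappa> * a \<le> 2^j * a" using assms \<open>a > 0\<close> by (intro mult_right_mono) auto
  then have "b \<le> 2^j * a" using assms by linarith
  then have "1 \<le> b / a" "b / a \<le> 2^j" using assms \<open>a > 0\<close> by (simp_all add: field_simps)
  then have "L a \<le> exp 2 ^ j * L ((b / a) * a)"
    using slowly_varying_iterated_ratio[OF sv \<open>A > 0\<close> ratio] assms by blast
  then have "L a \<le> exp 2 ^ j * L b" using \<open>a > 0\<close> by simp
  moreover have "a powr e \<le> (b / \<kappa>) powr e"
    using assms \<open>a > 0\<close> \<open>\<kappa> > 0\<close> by (intro powr_mono2') (auto simp: field_simps)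
  moreover have "(b / \<kappa>) powr e = \<kappa> powr (-e) * b powr e"
    using assms \<open>a > 0\<close> \<open>\<kappa> > 0\<close> by (simp add: powr_divide powr_minus field_simps)
  ultimately have "a powr e * L a \<le> (\<kappa> powr (-e) * b powr e) * (exp 2 ^ j * L b)"
    using slowly_varying_pos[OF sv \<open>a > 0\<close>] by (intro mult_mono) auto
  then show ?thesis by (simp add: mult_ac)
qed

text \<open>(1) \<open>\<Longrightarrow>\<close> (2): a variance bound along a subsequence with bounded ratios \<open>n\<^sub>k\<^sub>+\<^sub>1/n\<^sub>k \<le> \<kappa>\<close>
  bounds \<open>G(x)\<close> by bracketing \<open>1/x\<close> between \<open>n\<^sub>k\<close> and \<open>n\<^sub>k\<^sub>+\<^sub>1 \<le> \<kappa> n\<^sub>k\<close>.\<close>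

lemma spectral_bound_from_subsequence:
  fixes V G :: "_ \<Rightarrow> real" and n :: "nat \<Rightarrow> nat" and L :: "real \<Rightarrow> real"
  assumes sv: "slowly_varying L" and g2: "\<gamma> < 2"
    and low: "\<And>m. m \<ge> 1 \<Longrightarrow> real m ^ 2 / 2 * G (1 / real m) \<le> V m"
    and Gmono: "\<And>x y. 0 < x \<Longrightarrow> x \<le> y \<Longrightarrow> G x \<le> G y"
    and npos: "\<And>k. n k > 0" and nlim: "filterlim n at_top sequentially"
    and kap: "\<exists>\<kappa>. \<forall>k. real (n (Suc k)) / real (n k) \<le> \<kappa>"
    and var: "\<exists>C>0. eventually (\<lambda>k. V (n k) \<le> C * (real (n k) powr \<gamma> * L (real (n k)))) sequentially"
  shows "\<exists>C>0. \<exists>x0. 0 < x0 \<and> x0 \<le> pi \<and>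
           (\<forall>x. 0 < x \<and> x \<le> x0 \<longrightarrow> G x \<le> C * (x powr (2 - \<gamma>) * L (1 / x)))"
proof -
  obtain C1 k0 where "C1 > 0"
    and var_k: "\<And>k. k \<ge> k0 \<Longrightarrow> V (n k) \<le> C1 * (real (n k) powr \<gamma> * L (real (n k)))"
    using var unfolding eventually_sequentially by blast
  obtain \<kappa> where "\<And>k. real (n (Suc k)) / real (n k) \<le> \<kappa>" using kap by blast
  then have ratio: "real (n (Suc k)) \<le> \<kappa> * real (n k)" for k
    using npos[of k] by (simp add: divide_le_eq mult.commute)
  have "0 < real (n (Suc 0))" using npos by simp
  then have "0 < \<kappa> * real (n 0)" using ratio[of 0] by linarith
  then have "\<kappa> > 0" using npos[of 0] by (simp add: zero_less_mult_iff)
  obtain A where "A > 0" and doubling: "\<forall>y\<ge>A. \<forall>l. 1 \<le> l \<and> l \<le> 2 \<longrightarrow> L y \<le> exp 2 * L (l * y)"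
    using slowly_varying_ratio_bound[OF sv] by blast
  obtain j :: nat where "\<kappa> < 2^j" using real_arch_pow[of 2 \<kappa>] by auto
  define x0 where "x0 = min pi (min (1 / real (n k0)) (1 / (\<kappa> * A)))"
  define C where "C = 2 * C1 * (\<kappa> powr (2 - \<gamma>) * exp 2 ^ j)"
  have "G x \<le> C * (x powr (2 - \<gamma>) * L (1 / x))" if x: "0 < x" "x \<le> x0" for x
  proof -
    have "real (n k0) \<le> 1 / x" using x npos[of k0] by (simp add: x0_def field_simps)
    then obtain k where "k \<ge> k0" and k: "real (n k) \<le> 1 / x" "1 / x < real (n (Suc k))"
      using sequence_bracket[OF nlim] by blast
    have "real (n k) \<ge> 1" using npos[of k] by simp
    have "\<kappa> * A \<le> 1 / x" using x \<open>\<kappa> > 0\<close> \<open>A > 0\<close> by (simp add: x0_def field_simps)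
    moreover have "1 / x < \<kappa> * real (n k)" using k(2) ratio[of k] by linarith
    ultimately have "\<kappa> * A < \<kappa> * real (n k)" by linarith
    then have "A \<le> real (n k)" using \<open>\<kappa> > 0\<close> by simp
    have "G x \<le> G (1 / real (n k))" using x k(1) \<open>real (n k) \<ge> 1\<close> by (intro Gmono) (auto simp: field_simps)
    also have "\<dots> \<le> 2 * C1 * (real (n k) powr (\<gamma> - 2) * L (real (n k)))"
      using mass_bound_from_variance[of "n k" G V, OF low[of "n k"] var_k[OF \<open>k \<ge> k0\<close>]] npos[of k]
      by (simp add: Suc_le_eq)
    also have "\<dots> \<le> 2 * C1 * (\<kappa> powr (2 - \<gamma>) * exp 2 ^ j * ((1 / x) powr (\<gamma> - 2) * L (1 / x)))"
      using power_times_slowly_varying_comparable[OF sv \<open>A > 0\<close> doubling, of "\<gamma> - 2" "real (n k)" "1 / x" \<kappa> j]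
        g2 k(1) \<open>A \<le> real (n k)\<close> \<open>1 / x < \<kappa> * real (n k)\<close> \<open>\<kappa> < 2^j\<close> \<open>C1 > 0\<close>
      by (intro mult_left_mono) auto
    also have "\<dots> = C * (x powr (2 - \<gamma>) * L (1 / x))"
      using x by (simp add: C_def powr_divide powr_minus_divide[symmetric] mult_ac)
    finally show ?thesis .
  qed
  moreover have "0 < x0" "x0 \<le> pi" using npos[of k0] \<open>\<kappa> > 0\<close> \<open>A > 0\<close> by (auto simp: x0_def)
  moreover have "C > 0" using \<open>C1 > 0\<close> \<open>\<kappa> > 0\<close> by (simp add: C_def)
  ultimately show ?thesis by blast
qed

text \<open>(2) \<open>\<Longrightarrow>\<close> (3) rests on bounding the \<open>j\<close>-th dyadic term \<open>m\<^sup>2 4\<^sup>-\<^sup>j G(2\<^sup>j/m)\<close> of the kernel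
  estimate by \<open>m\<^sup>\<gamma> L(m) q\<^sup>j\<close> with \<open>q = 2\<^sup>-\<^sup>\<gamma>\<^sup>/\<^sup>2 < 1\<close>.  Below we write \<open>\<gamma> = 2\<delta>\<close>.  For small
  \<open>2\<^sup>j/m\<close> this uses the hypothesis on \<open>G\<close> and the Potter bound for \<open>L(m/2\<^sup>j)\<close>.\<close>

lemma dyadic_term_near:
  fixes G L :: "real \<Rightarrow> real" and M \<delta> C :: real
  assumes "M > 0" "C \<ge> 0"
    and mass: "G (2^j / M) \<le> C * ((2^j / M) powr (2 - 2*\<delta>) * L (M / 2^j))"
    and halving: "L (M / 2^j) \<le> 2 powr (\<delta> * real j) * L M"
  shows "M^2 / 4^j * G (2^j / M) \<le> C * (M powr (2*\<delta>) * L M) * (2 powr (-\<delta>))^j"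
proof -
  have power_identity:
    "M^2 / 4^j * (2^j / M) powr (2 - 2*\<delta>) * 2 powr (\<delta> * real j) = M powr (2*\<delta>) * (2 powr (-\<delta>))^j"
  proof (rule ln_inj_iff[THEN iffD1])
    have "ln (4::real) = 2 * ln 2" using ln_realpow[of 2 2] by simp
    then show "ln (M^2 / 4^j * (2^j / M) powr (2 - 2*\<delta>) * 2 powr (\<delta> * real j))
        = ln (M powr (2*\<delta>) * (2 powr (-\<delta>))^j)"
      using \<open>M > 0\<close> by (simp add: ln_mult ln_div ln_powr ln_realpow algebra_simps)
  qed (use \<open>M > 0\<close> in simp_all)
  have "M^2 / 4^j * G (2^j / M) \<le> M^2 / 4^j * (C * ((2^j / M) powr (2 - 2*\<delta>) * (2 powr (\<delta> * real j) * L M)))"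
    using mass halving \<open>C \<ge> 0\<close> by (intro mult_left_mono order_trans[OF mass] mult_left_mono) auto
  also have "\<dots> = C * L M * (M^2 / 4^j * (2^j / M) powr (2 - 2*\<delta>) * 2 powr (\<delta> * real j))"
    by (simp add: mult_ac)
  finally show ?thesis unfolding power_identity by (simp add: mult_ac)
qed

text \<open>For \<open>2\<^sup>j/m \<ge> x\<^sub>1\<close> only a uniform bound \<open>G \<le> G\<^sub>t\<^sub>o\<^sub>t\<close> (the total mass of \<open>F\<close>) is used, and the factor \<open>m\<^sup>\<delta>\<close> is
  absorbed into \<open>m\<^sup>\<gamma> L(m)\<close> by the lower bound \<open>L(m) \<ge> c m\<^sup>-\<^sup>\<delta>\<close>.\<close>

lemma dyadic_term_far:
  fixes G L :: "real \<Rightarrow> real" and M \<delta> x1 c Gt :: real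
  assumes "M > 0" "x1 > 0" "\<delta> < 1" "c > 0"
    and far: "x1 \<le> 2^j / M" and mass: "G (2^j / M) \<le> Gt" "0 \<le> G (2^j / M)"
    and lower: "c * M powr (-\<delta>) \<le> L M"
  shows "M^2 / 4^j * G (2^j / M) \<le> Gt * x1 powr (\<delta> - 2) / c * (M powr (2*\<delta>) * L M) * (2 powr (-\<delta>))^j"
proof -
  define \<rho> where "\<rho> = 2^j / M"
  have "\<rho> > 0" using \<open>M > 0\<close> by (simp add: \<rho>_def)
  have "M^2 / 4^j = \<rho> powr (-2)"
  proof (rule ln_inj_iff[THEN iffD1])
    have "ln (4::real) = 2 * ln 2" using ln_realpow[of 2 2] by simp
    then show "ln (M^2 / 4^j) = ln (\<rho> powr (-2))"
      using \<open>M > 0\<close> by (simp add: \<rho>_def ln_div ln_powr ln_realpow algebra_simps)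
  qed (use \<open>M > 0\<close> \<open>\<rho> > 0\<close> in simp_all)
  also have "\<dots> = \<rho> powr (\<delta> - 2) * \<rho> powr (-\<delta>)" by (simp add: powr_add[symmetric])
  also have "\<dots> \<le> x1 powr (\<delta> - 2) * \<rho> powr (-\<delta>)"
    using assms by (intro mult_right_mono powr_mono2') (auto simp: \<rho>_def)
  also have "\<rho> powr (-\<delta>) = M powr \<delta> * (2 powr (-\<delta>))^j"
    using \<open>M > 0\<close> by (simp add: \<rho>_def powr_divide powr_minus powr_realpow[symmetric] powr_powr
        field_simps flip: powr_mult)
  also have "M powr \<delta> \<le> (M powr (2*\<delta>) * L M) / c"
  proof -
    have "c * M powr \<delta> = c * M powr (-\<delta>) * M powr (2*\<delta>)"
      by (simp add: mult.assoc powr_add[symmetric])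
    also have "\<dots> \<le> L M * M powr (2*\<delta>)" using lower by (intro mult_right_mono) auto
    finally show ?thesis using \<open>c > 0\<close> by (simp add: field_simps)
  qed
  finally have "M^2 / 4^j \<le> x1 powr (\<delta> - 2) * ((M powr (2*\<delta>) * L M) / c * (2 powr (-\<delta>))^j)"
    by (simp add: mult_left_mono)
  then have "M^2 / 4^j * G (2^j / M) \<le> x1 powr (\<delta> - 2) * ((M powr (2*\<delta>) * L M) / c * (2 powr (-\<delta>))^j) * Gt"
    using mass by (intro mult_mono') auto
  then show ?thesis by (simp add: field_simps)
qed

lemma geometric_sum_le:
  fixes q :: real assumes "0 \<le> q" "q < 1"
  shows "(\<Sum>j\<le>N. q^j) \<le> 1 / (1 - q)"
proof -
  have "(\<Sum>j\<le>N. q^j) = (\<Sum>j<Suc N. q^j)" by (simp add: lessThan_Suc_atMost)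
  also have "\<dots> = (1 - q^Suc N) / (1 - q)" using assms by (subst sum_gp_strict) simp
  also have "\<dots> \<le> 1 / (1 - q)" using assms by (intro divide_right_mono) auto
  finally show ?thesis .
qed

lemma dyadic_terms_geometric:
  fixes G L :: "real \<Rightarrow> real"
  assumes sv: "slowly_varying L" and "0 < \<gamma>" "\<gamma> < 2"
    and Gnn: "\<And>x. 0 \<le> G x" and Gt: "\<And>x. G x \<le> Gt"
    and "C2 > 0" "x0 > 0" and Gb: "\<And>x. 0 < x \<Longrightarrow> x \<le> x0 \<Longrightarrow> G x \<le> C2 * (x powr (2 - \<gamma>) * L (1 / x))"
  shows "\<exists>D>0. \<exists>A\<ge>1. \<forall>M\<ge>A. \<forall>j.
           M^2 / 4^j * G (2^j / M) \<le> D * (M powr \<gamma> * L M * (2 powr (-(\<gamma> / 2)))^j)"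
proof -
  define \<delta> where "\<delta> = \<gamma> / 2"
  have "\<delta> > 0" "\<delta> < 1" "\<gamma> = 2 * \<delta>" using assms by (auto simp: \<delta>_def)
  obtain AP where "AP > 0" and halving: "\<And>i y. AP \<le> y / 2^i \<Longrightarrow> L (y / 2^i) \<le> 2 powr (\<delta> * real i) * L y"
    using slowly_varying_halving_bound[OF sv \<open>\<delta> > 0\<close>] by blast
  obtain c AL where "c > 0" and lower: "\<And>y. y \<ge> AL \<Longrightarrow> c * y powr (-\<delta>) \<le> L y"
    using slowly_varying_lower_power[OF sv \<open>\<delta> > 0\<close>] by blast
  define x1 where "x1 = min x0 (1 / AP)"
  define q :: real where "q = 2 powr (-\<delta>)"
  define D where "D = C2 + Gt * x1 powr (\<delta> - 2) / c"
  have "x1 > 0" using \<open>0 < x0\<close> \<open>AP > 0\<close> by (simp add: x1_def)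
  have "0 < q" using \<open>\<delta> > 0\<close> by (simp add: q_def)
  have "0 \<le> Gt" using Gnn[of 0] Gt[of 0] by linarith
  then have "D > 0" using \<open>C2 > 0\<close> \<open>c > 0\<close> \<open>x1 > 0\<close> by (simp add: D_def add_pos_nonneg)
  have "M^2 / 4^j * G (2^j / M) \<le> D * (M powr \<gamma> * L M * q^j)"
    if M: "M \<ge> max 1 AL" for M :: real and j :: nat
  proof -
    have weight: "0 \<le> M powr \<gamma> * L M * q^j"
      using M \<open>0 < q\<close> slowly_varying_pos[OF sv, of M] by simp
    show ?thesis
    proof (cases "2^j / M \<le> x1")
      case True
      then have "AP \<le> M / 2^j" using M \<open>AP > 0\<close> by (auto simp: x1_def field_simps)
      moreover have "G (2^j / M) \<le> C2 * ((2^j / M) powr (2 - 2*\<delta>) * L (M / 2^j))"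
        using Gb[of "2^j / M"] True M \<open>\<gamma> = 2 * \<delta>\<close> by (auto simp: x1_def)
      ultimately have "M^2 / 4^j * G (2^j / M) \<le> C2 * (M powr \<gamma> * L M * q^j)"
        using M \<open>C2 > 0\<close> dyadic_term_near[of M C2 G j \<delta> L] halving[of M j]
        unfolding q_def \<open>\<gamma> = 2 * \<delta>\<close> by (auto simp: mult.assoc)
      also have "\<dots> \<le> D * (M powr \<gamma> * L M * q^j)"
        using weight \<open>0 \<le> Gt\<close> \<open>c > 0\<close> by (intro mult_right_mono) (auto simp: D_def)
      finally show ?thesis .
    next
      case False
      then have "M^2 / 4^j * G (2^j / M) \<le> Gt * x1 powr (\<delta> - 2) / c * (M powr \<gamma> * L M * q^j)"
        using M \<open>x1 > 0\<close> \<open>\<delta> < 1\<close> \<open>c > 0\<close> Gt Gnn lower[of M]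
          dyadic_term_far[of M x1 \<delta> c j G Gt L]
        unfolding q_def \<open>\<gamma> = 2 * \<delta>\<close> by (auto simp: mult.assoc)
      also have "\<dots> \<le> D * (M powr \<gamma> * L M * q^j)"
        using weight \<open>C2 > 0\<close> by (intro mult_right_mono) (auto simp: D_def)
      finally show ?thesis .
    qed
  qed
  then have "\<forall>M\<ge>max 1 AL. \<forall>j. M^2 / 4^j * G (2^j / M) \<le> D * (M powr \<gamma> * L M * (2 powr (-(\<gamma> / 2)))^j)"
    by (simp add: q_def \<delta>_def)
  then show ?thesis using \<open>D > 0\<close> max.cobounded1[of 1 AL] by blast
qed

lemma variance_bound_from_spectral:
  fixes V :: "nat \<Rightarrow> real" and G L :: "real \<Rightarrow> real"
  assumes sv: "slowly_varying L" and "0 < \<gamma>" "\<gamma> < 2"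
    and up: "\<And>m. m \<ge> 1 \<Longrightarrow> V m \<le> (\<Sum>j\<le>m+2. 512 * real m ^ 2 / 4^j * G (2^j / real m))"
    and Gnn: "\<And>x. 0 \<le> G x" and Gt: "\<And>x. G x \<le> Gt"
    and spec: "\<exists>C>0. \<exists>x0. 0 < x0 \<and> x0 \<le> pi \<and>
                 (\<forall>x. 0 < x \<and> x \<le> x0 \<longrightarrow> G x \<le> C * (x powr (2 - \<gamma>) * L (1 / x)))"
  shows "\<exists>C>0. eventually (\<lambda>m. V m \<le> C * (real m powr \<gamma> * L (real m))) sequentially"
proof -
  define q :: real where "q = 2 powr (-(\<gamma> / 2))"
  have "0 < q" "q < 1" using \<open>0 < \<gamma>\<close> by (auto simp: q_def powr_less_one)
  obtain C2 x0 where "C2 > 0" "0 < x0"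
    and Gb: "\<And>x. 0 < x \<Longrightarrow> x \<le> x0 \<Longrightarrow> G x \<le> C2 * (x powr (2 - \<gamma>) * L (1 / x))"
    using spec by blast
  obtain D A where "D > 0" "A \<ge> 1"
    and dyadic_term: "\<And>M j. M \<ge> A \<Longrightarrow> M^2 / 4^j * G (2^j / M) \<le> D * (M powr \<gamma> * L M * q^j)"
    using dyadic_terms_geometric[OF sv \<open>0 < \<gamma>\<close> \<open>\<gamma> < 2\<close> Gnn Gt \<open>C2 > 0\<close> \<open>0 < x0\<close> Gb]
    unfolding q_def by blast
  have bound: "V m \<le> 512 * D / (1 - q) * (real m powr \<gamma> * L (real m))" if m: "real m \<ge> A" for m
  proof -
    have "V m \<le> (\<Sum>j\<le>m+2. 512 * real m ^ 2 / 4^j * G (2^j / real m))"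
      using up m \<open>A \<ge> 1\<close> by simp
    also have "\<dots> \<le> (\<Sum>j\<le>m+2. 512 * D * (real m powr \<gamma> * L (real m)) * q^j)"
    proof (rule sum_mono)
      fix j
      have "512 * real m ^ 2 / 4^j * G (2^j / real m) = 512 * (real m ^ 2 / 4^j * G (2^j / real m))"
        by simp
      also have "\<dots> \<le> 512 * (D * (real m powr \<gamma> * L (real m) * q^j))"
        using dyadic_term[OF m, of j] by (rule mult_left_mono) simp
      finally show "512 * real m ^ 2 / 4^j * G (2^j / real m)
          \<le> 512 * D * (real m powr \<gamma> * L (real m)) * q^j" by (simp add: mult_ac)
    qed
    also have "\<dots> = 512 * D * (real m powr \<gamma> * L (real m)) * (\<Sum>j\<le>m+2. q^j)"
      by (rule sum_distrib_left[symmetric])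
    also have "\<dots> \<le> 512 * D * (real m powr \<gamma> * L (real m)) * (1 / (1 - q))"
      using \<open>D > 0\<close> m \<open>A \<ge> 1\<close> slowly_varying_pos[OF sv, of "real m"] \<open>0 < q\<close> \<open>q < 1\<close>
      by (intro mult_left_mono geometric_sum_le) auto
    finally show ?thesis by simp
  qed
  have "eventually (\<lambda>m. real m \<ge> A) sequentially"
    using filterlim_real_sequentially unfolding filterlim_at_top by blast
  then have "eventually (\<lambda>m. V m \<le> 512 * D / (1 - q) * (real m powr \<gamma> * L (real m))) sequentially"
    by (rule eventually_mono) (rule bound)
  moreover have "512 * D / (1 - q) > 0" using \<open>D > 0\<close> \<open>q < 1\<close> by simp
  ultimately show ?thesis by blast
qed

theorem lemma2:
  fixes M :: "'a measure" and X :: "nat \<Rightarrow> 'a \<Rightarrow> real" and F :: "real measure"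
    and \<gamma> :: real and L :: "real \<Rightarrow> real" and n :: "nat \<Rightarrow> nat"
  assumes "prob_space M"
    and "\<And>i. i \<ge> 1 \<Longrightarrow> X i \<in> borel_measurable M"
    and "\<And>i. i \<ge> 1 \<Longrightarrow> integrable M (\<lambda>\<omega>. (X i \<omega>)\<^sup>2)"
    and "\<And>i. i \<ge> 1 \<Longrightarrow> integral\<^sup>L M (X i) = 0"
    and "spectral_measure_of M X F"
    and "0 < \<gamma>" "\<gamma> < 2"
    and "slowly_varying L"
    and "\<And>k. n k > 0" "mono n" "filterlim n at_top sequentially"
    and "\<exists>\<kappa>. \<forall>k. real (n (Suc k)) / real (n k) \<le> \<kappa>"
  shows "((\<exists>C>0. eventually (\<lambda>k. prob_space.variance M (\<lambda>\<omega>. \<Sum>i=1..n k. X i \<omega>)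
                    \<le> C * (real (n k) powr \<gamma> * L (real (n k)))) sequentially)
          \<longleftrightarrow> (\<exists>C>0. \<exists>x0. 0 < x0 \<and> x0 \<le> pi \<and>
                 (\<forall>x. 0 < x \<and> x \<le> x0 \<longrightarrow> measure F {-x..x} \<le> C * (x powr (2 - \<gamma>) * L (1 / x)))))
       \<and> ((\<exists>C>0. \<exists>x0. 0 < x0 \<and> x0 \<le> pi \<and>
                 (\<forall>x. 0 < x \<and> x \<le> x0 \<longrightarrow> measure F {-x..x} \<le> C * (x powr (2 - \<gamma>) * L (1 / x))))
          \<longleftrightarrow> (\<exists>C>0. eventually (\<lambda>m. prob_space.variance M (\<lambda>\<omega>. \<Sum>i=1..m. X i \<omega>)
                    \<le> C * (real m powr \<gamma> * L (real m))) sequentially))"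
proof -
  define V where "V m = prob_space.variance M (\<lambda>\<omega>. \<Sum>i=1..m. X i \<omega>)" for m
  define G where "G = spectral_mass F"
  have sF: "sets F = sets borel" and fF: "finite_measure F" and supp: "emeasure F (- {-pi..pi}) = 0"
    using assms(5) unfolding spectral_measure_of_def by auto
  have V_eq: "V m = integral\<^sup>L F (variance_kernel m)" for m
    unfolding V_def by (rule variance_sum_eq_kernel_integral[OF assms(1-5)])
  have low: "real m ^ 2 / 2 * G (1 / real m) \<le> V m" for m
    unfolding V_eq G_def by (rule kernel_integral_lower[OF sF fF])
  have up: "V m \<le> (\<Sum>j\<le>m+2. 512 * real m ^ 2 / 4^j * G (2^j / real m))" if "m \<ge> 1" for m
    unfolding V_eq G_def by (rule kernel_integral_upper[OF sF fF supp that])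
  have Gmono: "G x \<le> G y" if "x \<le> y" for x y
    using that by (auto simp: G_def spectral_mass_def sF intro!: finite_measure.finite_measure_mono[OF fF])
  have Gbounded: "0 \<le> G x" "G x \<le> measure F (space F)" for x
    unfolding G_def spectral_mass_def by (simp_all add: finite_measure.bounded_measure[OF fF])
  have "filterlim n at_top sequentially" by fact
  then have sub: "eventually P sequentially \<Longrightarrow> eventually (\<lambda>k. P (n k)) sequentially" for P
    unfolding filterlim_iff by blast
  show ?thesis
    unfolding V_def[symmetric] spectral_mass_def[symmetric] G_def[symmetric]
    using spectral_bound_from_subsequence[OF assms(8,7) low Gmono assms(9,11,12)]
      variance_bound_from_spectral[OF assms(8,6,7) up Gbounded] sub by blast
qed

end
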